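(* Let $T_n$ denote the Chebyshev polynomial of degree $n$. For any $0\le\delta<1$ and any sequence $\boldsymbol\lambda=(\lambda_1,\dots,\lambda_d)$ of reals with $-1\le\lambda_i\le1+\delta$, we have $$\gamma_2(\mathcal D_{T_n,\boldsymbol\lambda})\le(2n^2-1)\,T_n(1+\delta)\qquad\text{for all }n\ge1.$$
   Context: The Chebyshev polynomial $T_n$ is defined by $T_n(\cos\theta)=\cos(n\theta)$. For a continuously differentiable $f$ and a sequence $\boldsymbol\lambda=(\lambda_1,\dots,\lambda_d)$, $\mathcal D_{f,\boldsymbol\lambda}$ is the $d\times d$ matrix with entries $(\mathcal D_{f,\boldsymbol\lambda})_{ij}=\frac{f(\lambda_i)-f(\lambda_j)}{\lambda_i-\lambda_j}$ if $\lambda_i\ne\lambda_j$ and $f'(\lambda_i)$ if $\lambda_i=\lambda_j$. For a $d\times d$ matrix $\mathbf M$, $\gamma_2(\mathbf M)=\inf\max\big(\{\|v_i\|^2:1\le i\le d\}\cup\{\|w_j\|^2:1\le j\le d\}\big)$, the infimum over all families of vectors $v_i,w_j$ (in any Hilbert space) with $\mathbf M_{ij}=\langle v_i|w_j\rangle$ for all $i,j$. *)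

theory Defs
  imports "HOL-Analysis.Analysis"
begin

fun cheb :: "nat \<Rightarrow> real \<Rightarrow> real" where
  "cheb 0 x = 1"
| "cheb (Suc 0) x = x"
| "cheb (Suc (Suc n)) x = 2 * x * cheb (Suc n) x - cheb n x"

definition divdiff_matrix :: "(real \<Rightarrow> real) \<Rightarrow> (nat \<Rightarrow> real) \<Rightarrow> nat \<Rightarrow> nat \<Rightarrow> real" where
  "divdiff_matrix f lam i j =
     (if lam i \<noteq> lam j then (f (lam i) - f (lam j)) / (lam i - lam j) else deriv f (lam i))"

text \<open>Vectors live in R^k (k arbitrary),
  represented as functions on {0..<k}; the inner product is the standard one.
  (Any factorization through a Hilbert space reduces to a finite-dimensional
  real one.) The 0 inserted into the Max set is harmless since squared norms are
  nonnegative, and makes the definition total for d = 0.\<close>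
definition gamma2 :: "nat \<Rightarrow> (nat \<Rightarrow> nat \<Rightarrow> real) \<Rightarrow> real" where
  "gamma2 d M = Inf {c. \<exists>(k::nat) (v::nat \<Rightarrow> nat \<Rightarrow> real) (w::nat \<Rightarrow> nat \<Rightarrow> real).
       (\<forall>i<d. \<forall>j<d. M i j = (\<Sum>l<k. v i l * w j l)) \<and>
       c = Max (insert 0 ((\<lambda>i. \<Sum>l<k. (v i l)^2) ` {..<d} \<union> (\<lambda>j. \<Sum>l<k. (w j l)^2) ` {..<d}))}"

end

theory Submission
  imports Defs
begin

text \<open>With U_k the Chebyshev polynomials of the second kind, e_0 = 1 and e_j = 2 for j > 0,
  T_n(x) - T_n(y) = (x - y) \<Sum>_{j<n} e_j T_j(x) U_{n-1-j}(y), so the divided-difference matrix is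
  a sum of n weighted rank-one matrices. Rescaling each term so that both factors are bounded
  by their maximum on [-1, X], X = 1 + \<delta>, which for |T_j| and |U_k| is attained at X, bounds
  \<gamma>_2 by \<Sum>_{j<n} e_j T_j(X) U_{n-1-j}(X) = T_n'(X). Writing X = cosh t gives
  T_a(X) T_b(X) \<le> T_{a+b}(X) and U_k(X) \<le> (k + 1) T_k(X), whence T_n'(X) \<le> n^2 T_n(X).
  This is stronger than the claimed bound and does not need \<delta> < 1.\<close>

fun chebU :: "nat \<Rightarrow> real \<Rightarrow> real" where
  "chebU 0 x = 1"
| "chebU (Suc 0) x = 2 * x"
| "chebU (Suc (Suc n)) x = 2 * x * chebU (Suc n) x - chebU n x"

lemma chebU_Suc: "chebU (Suc k) x = x * chebU k x + cheb (Suc k) x"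
proof (induction k x rule: chebU.induct)
  case (3 n x)
  have "chebU (Suc (Suc (Suc n))) x
      = 2 * x * (x * chebU (Suc n) x + cheb (Suc (Suc n)) x) - (x * chebU n x + cheb (Suc n) x)"
    using 3 by (simp only: chebU.simps)
  also have "\<dots> = x * chebU (Suc (Suc n)) x + cheb (Suc (Suc (Suc n))) x"
    by (simp only: chebU.simps cheb.simps) (simp add: algebra_simps)
  finally show ?case .
qed simp_all

lemma chebU_eq_sum_cheb: "chebU k x = (\<Sum>i\<le>k. x ^ (k - i) * cheb i x)"
proof (induction k)
  case 0
  then show ?case by simp
next
  case (Suc k)
  have "(\<Sum>i\<le>Suc k. x ^ (Suc k - i) * cheb i x) = x * (\<Sum>i\<le>k. x ^ (k - i) * cheb i x) + cheb (Suc k) x"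
    by (simp add: sum_distrib_left Suc_diff_le mult.assoc)
  then show ?case
    using Suc by (simp add: chebU_Suc)
qed

lemma cheb_cos: "cheb k (cos t) = cos (real k * t)"
proof (induction k "cos t" rule: cheb.induct)
  case (3 k)
  have "cos (real (Suc (Suc k)) * t) = 2 * cos t * cos (real (Suc k) * t) - cos (real k * t)"
    using cos_add[of "real (Suc k) * t" t] cos_diff[of "real (Suc k) * t" t]
    by (simp add: algebra_simps)
  then show ?case
    using 3 by simp
qed simp_all

lemma cheb_cosh: "cheb k (cosh t) = cosh (real k * t)"
proof (induction k "cosh t" rule: cheb.induct)
  case (3 k)
  have "cosh (real (Suc (Suc k)) * t) = 2 * cosh t * cosh (real (Suc k) * t) - cosh (real k * t)"
    using cosh_add[of "real (Suc k) * t" t] cosh_diff[of "real (Suc k) * t" t]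
    by (simp add: algebra_simps)
  then show ?case
    using 3 by simp
qed simp_all

lemma cheb_eq_cosh_arcosh: "x \<ge> 1 \<Longrightarrow> cheb k x = cosh (real k * arcosh x)"
  using cheb_cosh[of k "arcosh x"] by simp

lemma cheb_ge_1: "x \<ge> 1 \<Longrightarrow> cheb k x \<ge> 1"
  by (simp add: cheb_eq_cosh_arcosh cosh_real_ge_1)

lemma cheb_mono:
  assumes "x \<ge> 1" "k \<le> m"
  shows "cheb k x \<le> cheb m x"
  using assms by (simp add: cheb_eq_cosh_arcosh cosh_real_nonneg_le_iff mult_right_mono)

lemma abs_cheb_le:
  assumes "x \<ge> 1" "-1 \<le> y" "y \<le> x"
  shows "\<bar>cheb k y\<bar> \<le> cheb k x"
proof (cases "y \<le> 1")
  case True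
  then have "\<bar>cheb k y\<bar> \<le> 1"
    using cheb_cos[of k "arccos y"] assms by simp
  then show ?thesis
    using cheb_ge_1[OF assms(1)] by (rule order_trans)
next
  case False
  then have "arcosh y \<le> arcosh x"
    using assms by (simp add: not_less[symmetric])
  then have "cosh (real k * arcosh y) \<le> cosh (real k * arcosh x)"
    using False assms by (simp add: cosh_real_nonneg_le_iff mult_left_mono)
  then show ?thesis
    using False assms by (simp add: cheb_eq_cosh_arcosh cosh_real_ge_1)
qed

lemma cheb_mult_le_cheb_add:
  assumes "x \<ge> 1"
  shows "cheb a x * cheb b x \<le> cheb (a + b) x"
proof -
  define t where "t = arcosh x"
  have "t \<ge> 0"
    using assms by (simp add: t_def)
  have "cheb (a + b) x = cosh (real a * t) * cosh (real b * t) + sinh (real a * t) * sinh (real b * t)"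
    using assms by (simp add: cheb_eq_cosh_arcosh t_def distrib_right cosh_add)
  also have "\<dots> \<ge> cosh (real a * t) * cosh (real b * t)"
    using \<open>t \<ge> 0\<close> by simp
  finally show ?thesis
    using assms by (simp add: cheb_eq_cosh_arcosh t_def)
qed

lemma power_mult_cheb_le:
  assumes "x \<ge> 1"
  shows "x ^ m * cheb i x \<le> cheb (i + m) x"
proof (induction m)
  case (Suc m)
  have "x ^ Suc m * cheb i x \<le> cheb 1 x * cheb (i + m) x"
    using Suc assms by (simp add: mult.assoc mult_left_mono)
  also have "\<dots> \<le> cheb (i + Suc m) x"
    using cheb_mult_le_cheb_add[OF assms, of 1 "i + m"] by simp
  finally show ?case .
qed simp

lemma chebU_le_cheb:
  assumes "x \<ge> 1"
  shows "chebU k x \<le> real (Suc k) * cheb k x"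
proof -
  have "chebU k x \<le> (\<Sum>i\<le>k. cheb k x)"
    unfolding chebU_eq_sum_cheb
    using power_mult_cheb_le[OF assms] by (intro sum_mono) (metis atMost_iff le_add_diff_inverse)
  then show ?thesis
    by simp
qed

lemma abs_chebU_le:
  assumes "x \<ge> 1" "-1 \<le> y" "y \<le> x"
  shows "\<bar>chebU k y\<bar> \<le> chebU k x"
proof -
  have "\<bar>y\<bar> ^ (k - i) \<le> x ^ (k - i)" for i
    using assms by (intro power_mono) auto
  then have "\<bar>y ^ (k - i) * cheb i y\<bar> \<le> x ^ (k - i) * cheb i x" for i
    unfolding abs_mult power_abs using abs_cheb_le[OF assms] assms by (intro mult_mono) auto
  then show ?thesis
    unfolding chebU_eq_sum_cheb by (rule order_trans[OF sum_abs sum_mono])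
qed

lemma chebU_ge_1:
  assumes "x \<ge> 1"
  shows "chebU k x \<ge> 1"
proof -
  have "cheb k x \<le> (\<Sum>i\<le>k. x ^ (k - i) * cheb i x)"
    using member_le_sum[of k "{..k}" "\<lambda>i. x ^ (k - i) * cheb i x"] cheb_ge_1[OF assms] assms
    by (simp add: order_trans[OF zero_le_one])
  then show ?thesis
    using cheb_ge_1[OF assms, of k] by (simp add: chebU_eq_sum_cheb)
qed

definition cheb_weight :: "nat \<Rightarrow> real" where
  "cheb_weight j = (if j = 0 then 1 else 2)"

definition cheb_divdiff :: "nat \<Rightarrow> real \<Rightarrow> real \<Rightarrow> real" where
  "cheb_divdiff n x y = (\<Sum>j<n. cheb_weight j * cheb j x * chebU (n - 1 - j) y)"

lemma cheb_divdiff_Suc_Suc: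
  "cheb_divdiff (Suc (Suc n)) x y = 2 * y * cheb_divdiff (Suc n) x y - cheb_divdiff n x y + 2 * cheb (Suc n) x"
proof -
  have U: "chebU (Suc n - j) y = 2 * y * chebU (n - j) y - chebU (n - 1 - j) y" if "j < n" for j
  proof -
    have "Suc n - j = Suc (Suc (n - 1 - j))" "n - j = Suc (n - 1 - j)"
      using that by auto
    then show ?thesis
      by simp
  qed
  have "(\<Sum>j<n. cheb_weight j * cheb j x * chebU (Suc n - j) y)
      = 2 * y * (\<Sum>j<n. cheb_weight j * cheb j x * chebU (n - j) y) - cheb_divdiff n x y"
    by (simp add: U cheb_divdiff_def sum_distrib_left sum_subtractf algebra_simps)
  then show ?thesis
    by (simp add: cheb_divdiff_def cheb_weight_def Suc_diff_le algebra_simps)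
qed

lemma cheb_diff_eq_mult_divdiff: "cheb n x - cheb n y = (x - y) * cheb_divdiff n x y"
proof (induction n x rule: cheb.induct)
  case (3 n x)
  have "cheb (Suc (Suc n)) x - cheb (Suc (Suc n)) y
     = 2 * y * (cheb (Suc n) x - cheb (Suc n) y) + 2 * (x - y) * cheb (Suc n) x - (cheb n x - cheb n y)"
    by (simp add: algebra_simps)
  also have "\<dots> = 2 * y * ((x - y) * cheb_divdiff (Suc n) x y) + 2 * (x - y) * cheb (Suc n) x
      - (x - y) * cheb_divdiff n x y"
    by (simp only: 3)
  also have "\<dots> = (x - y) * cheb_divdiff (Suc (Suc n)) x y"
    by (simp add: cheb_divdiff_Suc_Suc algebra_simps)
  finally show ?case .
qed (simp_all add: cheb_divdiff_def cheb_weight_def)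

lemma isCont_cheb_divdiff: "isCont (\<lambda>x. cheb_divdiff n x y) x"
proof -
  have "isCont (cheb k) x" for k
    by (induction k x rule: cheb.induct) (auto intro!: continuous_intros)
  then show ?thesis
    unfolding cheb_divdiff_def by (auto intro!: continuous_intros)
qed

lemma cheb_has_real_derivative: "(cheb n has_real_derivative cheb_divdiff n x x) (at x)"
  unfolding CARAT_DERIV using cheb_diff_eq_mult_divdiff[of n _ x] isCont_cheb_divdiff
  by (auto simp: mult.commute)

lemma divdiff_matrix_cheb: "divdiff_matrix (cheb n) lam i j = cheb_divdiff n (lam i) (lam j)"
  using cheb_diff_eq_mult_divdiff[of n "lam i" "lam j"] DERIV_imp_deriv[OF cheb_has_real_derivative]
  by (simp add: divdiff_matrix_def)

lemma sum_cheb_weight_mult: "(\<Sum>j<n. cheb_weight j * real (n - j)) = real n ^ 2"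
proof (induction n)
  case (Suc n)
  have "(\<Sum>j<Suc n. cheb_weight j * real (Suc n - j)) = (\<Sum>j<n. cheb_weight j * real (n - j)) + (\<Sum>j<Suc n. cheb_weight j)"
    by (simp add: sum.distrib[symmetric] Suc_diff_le algebra_simps)
  also have "(\<Sum>j<Suc n. cheb_weight j) = 2 * real n + 1"
    by (induction n) (simp_all add: cheb_weight_def)
  finally show ?case
    using Suc by (simp add: power2_eq_square algebra_simps)
qed simp

lemma cheb_divdiff_diag_le:
  assumes "x \<ge> 1"
  shows "cheb_divdiff n x x \<le> real n ^ 2 * cheb n x"
proof -
  have "cheb j x * chebU (n - 1 - j) x \<le> real (n - j) * cheb n x" if "j < n" for j
  proof -
    have "cheb j x * chebU (n - 1 - j) x \<le> real (n - j) * (cheb j x * cheb (n - 1 - j) x)"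
      using chebU_le_cheb[OF assms, of "n - 1 - j"] cheb_ge_1[OF assms, of j] that
      by (simp add: Suc_diff_Suc mult_left_mono mult.left_commute)
    also have "\<dots> \<le> real (n - j) * cheb n x"
      using that
      by (intro mult_left_mono order_trans[OF cheb_mult_le_cheb_add[OF assms] cheb_mono[OF assms]]) auto
    finally show ?thesis .
  qed
  then have "cheb_divdiff n x x \<le> (\<Sum>j<n. cheb_weight j * real (n - j) * cheb n x)"
    unfolding cheb_divdiff_def mult.assoc by (intro sum_mono mult_left_mono) (simp_all add: cheb_weight_def)
  also have "\<dots> = real n ^ 2 * cheb n x"
    by (simp only: sum_distrib_right[symmetric] sum_cheb_weight_mult)
  finally show ?thesis .
qed

lemma gamma2_le_factorization:
  fixes k :: nat and v w :: "nat \<Rightarrow> nat \<Rightarrow> real"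
  assumes M: "\<And>i j. i < d \<Longrightarrow> j < d \<Longrightarrow> M i j = (\<Sum>l<k. v i l * w j l)"
    and "0 \<le> B"
    and v: "\<And>i. i < d \<Longrightarrow> (\<Sum>l<k. (v i l)^2) \<le> B"
    and w: "\<And>j. j < d \<Longrightarrow> (\<Sum>l<k. (w j l)^2) \<le> B"
  shows "gamma2 d M \<le> B"
proof -
  let ?norms = "\<lambda>k v w. insert 0 ((\<lambda>i. \<Sum>l<k. (v i l)^2) ` {..<d} \<union> (\<lambda>j. \<Sum>l<k. (w j l)^2) ` {..<d})"
  let ?S = "{c. \<exists>(k::nat) (v::nat \<Rightarrow> nat \<Rightarrow> real) (w::nat \<Rightarrow> nat \<Rightarrow> real).
       (\<forall>i<d. \<forall>j<d. M i j = (\<Sum>l<k. v i l * w j l)) \<and> c = Max (?norms k v w)}"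
  have "Max (?norms k v w) \<in> ?S"
    unfolding mem_Collect_eq by (intro exI[of _ k] exI[of _ v] exI[of _ w] conjI) (simp_all add: M)
  moreover have "bdd_below ?S"
    by (rule bdd_belowI[of _ 0]) (auto intro: Max_ge)
  ultimately have "gamma2 d M \<le> Max (?norms k v w)"
    unfolding gamma2_def by (rule cInf_lower)
  also have "\<dots> \<le> B"
    using \<open>0 \<le> B\<close> v w by (subst Max_le_iff) auto
  finally show ?thesis .
qed

lemma gamma2_le_weighted_sum_rank_one:
  fixes k :: nat and a F G :: "nat \<Rightarrow> real" and f g :: "nat \<Rightarrow> nat \<Rightarrow> real"
  assumes M: "\<And>i j. i < d \<Longrightarrow> j < d \<Longrightarrow> M i j = (\<Sum>l<k. a l * f l i * g l j)"
    and a: "\<And>l. l < k \<Longrightarrow> 0 \<le> a l"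
    and F: "\<And>l. l < k \<Longrightarrow> 0 < F l" "\<And>l i. l < k \<Longrightarrow> i < d \<Longrightarrow> \<bar>f l i\<bar> \<le> F l"
    and G: "\<And>l. l < k \<Longrightarrow> 0 < G l" "\<And>l j. l < k \<Longrightarrow> j < d \<Longrightarrow> \<bar>g l j\<bar> \<le> G l"
  shows "gamma2 d M \<le> (\<Sum>l<k. a l * F l * G l)"
proof (rule gamma2_le_factorization)
  define v where "v i l = sqrt (a l * G l / F l) * f l i" for i l
  define w where "w j l = sqrt (a l * F l / G l) * g l j" for j l
  have "sqrt (a l * G l / F l) * sqrt (a l * F l / G l) = a l" if "l < k" for l
    using a[OF that] F(1)[OF that] G(1)[OF that]
    by (simp add: real_sqrt_mult[symmetric] power2_eq_square[symmetric])
  then show "M i j = (\<Sum>l<k. v i l * w j l)" if "i < d" "j < d" for i j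
    unfolding M[OF that] v_def w_def by (intro sum.cong) (auto simp: algebra_simps)
  have "(v i l)^2 \<le> a l * F l * G l" if "l < k" "i < d" for i l
  proof -
    have "(v i l)^2 = a l * G l / F l * (f l i)^2"
      using a[OF that(1)] F(1)[OF that(1)] G(1)[OF that(1)] by (simp add: v_def power_mult_distrib)
    also have "\<dots> \<le> a l * G l / F l * (F l)^2"
      using a[OF that(1)] F[OF that(1)] G(1)[OF that(1)] that
      by (intro mult_left_mono) (auto simp: abs_le_square_iff[symmetric])
    finally show ?thesis
      using F(1)[OF that(1)] by (simp add: power2_eq_square mult_ac)
  qed
  then show "(\<Sum>l<k. (v i l)^2) \<le> (\<Sum>l<k. a l * F l * G l)" if "i < d" for i
    using that by (intro sum_mono) auto
  have "(w j l)^2 \<le> a l * F l * G l" if "l < k" "j < d" for j l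
  proof -
    have "(w j l)^2 = a l * F l / G l * (g l j)^2"
      using a[OF that(1)] F(1)[OF that(1)] G(1)[OF that(1)] by (simp add: w_def power_mult_distrib)
    also have "\<dots> \<le> a l * F l / G l * (G l)^2"
      using a[OF that(1)] F(1)[OF that(1)] G[OF that(1)] that
      by (intro mult_left_mono) (auto simp: abs_le_square_iff[symmetric])
    finally show ?thesis
      using G(1)[OF that(1)] by (simp add: power2_eq_square mult_ac)
  qed
  then show "(\<Sum>l<k. (w j l)^2) \<le> (\<Sum>l<k. a l * F l * G l)" if "j < d" for j
    using that by (intro sum_mono) auto
  show "0 \<le> (\<Sum>l<k. a l * F l * G l)"
    using a F(1) G(1) by (intro sum_nonneg) (simp add: less_imp_le)
qed

theorem lemma6:
  fixes \<delta> :: real and d n :: nat and lam :: "nat \<Rightarrow> real"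
  assumes "0 \<le> \<delta>" and "\<delta> < 1"
    and "\<forall>i<d. -1 \<le> lam i \<and> lam i \<le> 1 + \<delta>"
    and "n \<ge> 1"
  shows "gamma2 d (divdiff_matrix (cheb n) lam) \<le> (2 * real n ^ 2 - 1) * cheb n (1 + \<delta>)"
proof -
  define x where "x = 1 + \<delta>"
  have "x \<ge> 1"
    using assms(1) by (simp add: x_def)
  have lam: "-1 \<le> lam i" "lam i \<le> x" if "i < d" for i
    using assms(3) that by (simp_all add: x_def)
  have "gamma2 d (divdiff_matrix (cheb n) lam) \<le> (\<Sum>l<n. cheb_weight l * cheb l x * chebU (n - 1 - l) x)"
    using cheb_ge_1[OF \<open>x \<ge> 1\<close>] chebU_ge_1[OF \<open>x \<ge> 1\<close>]
      abs_cheb_le[OF \<open>x \<ge> 1\<close> lam] abs_chebU_le[OF \<open>x \<ge> 1\<close> lam]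
    by (intro gamma2_le_weighted_sum_rank_one[where f = "\<lambda>l i. cheb l (lam i)" and g = "\<lambda>l j. chebU (n - 1 - l) (lam j)"])
      (auto simp: divdiff_matrix_cheb cheb_divdiff_def cheb_weight_def less_le_trans[OF zero_less_one])
  also have "\<dots> = cheb_divdiff n x x"
    by (simp add: cheb_divdiff_def)
  also have "\<dots> \<le> real n ^ 2 * cheb n x"
    using \<open>x \<ge> 1\<close> by (rule cheb_divdiff_diag_le)
  also have "\<dots> \<le> (2 * real n ^ 2 - 1) * cheb n x"
    using assms(4) cheb_ge_1[OF \<open>x \<ge> 1\<close>, of n] by (intro mult_right_mono) auto
  finally show ?thesis
    by (simp add: x_def)
qed

end
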